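(* Let $P \in S$ have degree $n$ in $x$, where $n$ is a prime number. Let $p_n$ be the leading coefficient of $P$ and $\rho = \deg_y(p_n)$, and let $s = \deg_y(\sigma(y))$. If $\sum_{i=0}^{n-1} s^i$ does not divide $\rho$, then $C_S(P) = K[P]$.
   Context: Standing conventions: $K$ is a field, $R = K[y]$, $\sigma$ is a $K$-algebra endomorphism of $R$ with $\deg_y(\sigma(y)) > 1$, and $\delta$ is a $K$-linear $\sigma$-derivation of $R$ ($\delta(ab) = \sigma(a)\delta(b) + \delta(a)b$). $S = R[x;\sigma,\delta]$ is the Ore extension (polynomials $\sum r_i x^i$, $r_i\in R$, with $xr = \sigma(r)x + \delta(r)$). Degree of an element of $S$ means degree in $x$; its leading coefficient is the coefficient in $K[y]$ of the highest power of $x$. $C_S(P)$ is the centralizer of $P$ in $S$, and $K[P] = \{\sum_i c_i P^i : c_i \in K\}$. *)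

theory Defs
  imports "HOL-Computational_Algebra.Polynomial" "HOL-Computational_Algebra.Primes"
begin

text \<open>Elements of the Ore extension S = R[x;sigma,delta], R = K[y], are represented as
  polynomials in x with coefficients in K[y], i.e. of type 'a poly poly, written
  sum r_i x^i with coefficients on the left. Degree / leading coefficient are
  the usual ones of the outer polynomial (degree in x).\<close>

definition ore_endo :: "('a::field poly \<Rightarrow> 'a poly) \<Rightarrow> bool" where
  "ore_endo \<sigma> \<longleftrightarrow>
     (\<forall>a b. \<sigma> (a + b) = \<sigma> a + \<sigma> b) \<and>
     (\<forall>a b. \<sigma> (a * b) = \<sigma> a * \<sigma> b) \<and>
     \<sigma> 1 = 1 \<and>
     (\<forall>c. \<sigma> [:c:] = [:c:])"

definition ore_sigma_derivation ::
    "('a::field poly \<Rightarrow> 'a poly) \<Rightarrow> ('a poly \<Rightarrow> 'a poly) \<Rightarrow> bool" where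
  "ore_sigma_derivation \<sigma> \<delta> \<longleftrightarrow>
     (\<forall>a b. \<delta> (a + b) = \<delta> a + \<delta> b) \<and>
     (\<forall>c a. \<delta> (smult c a) = smult c (\<delta> a)) \<and>
     (\<forall>a b. \<delta> (a * b) = \<sigma> a * \<delta> b + \<delta> a * b)"

text \<open>Left multiplication by x: x (sum r_i x^i) = sum (sigma(r_i) x^(i+1) + delta(r_i) x^i).\<close>
definition ore_xmul ::
    "('a::field poly \<Rightarrow> 'a poly) \<Rightarrow> ('a poly \<Rightarrow> 'a poly) \<Rightarrow> 'a poly poly \<Rightarrow> 'a poly poly" where
  "ore_xmul \<sigma> \<delta> g = pCons 0 (map_poly \<sigma> g) + map_poly \<delta> g"

definition ore_mult ::
    "('a::field poly \<Rightarrow> 'a poly) \<Rightarrow> ('a poly \<Rightarrow> 'a poly) \<Rightarrow> 'a poly poly \<Rightarrow> 'a poly poly \<Rightarrow> 'a poly poly" where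
  "ore_mult \<sigma> \<delta> f g = (\<Sum>i\<le>degree f. smult (coeff f i) ((ore_xmul \<sigma> \<delta> ^^ i) g))"

fun ore_pow ::
    "('a::field poly \<Rightarrow> 'a poly) \<Rightarrow> ('a poly \<Rightarrow> 'a poly) \<Rightarrow> 'a poly poly \<Rightarrow> nat \<Rightarrow> 'a poly poly" where
  "ore_pow \<sigma> \<delta> P 0 = 1"
| "ore_pow \<sigma> \<delta> P (Suc k) = ore_mult \<sigma> \<delta> P (ore_pow \<sigma> \<delta> P k)"

definition ore_centralizer ::
    "('a::field poly \<Rightarrow> 'a poly) \<Rightarrow> ('a poly \<Rightarrow> 'a poly) \<Rightarrow> 'a poly poly \<Rightarrow> 'a poly poly set" where
  "ore_centralizer \<sigma> \<delta> P = {Q. ore_mult \<sigma> \<delta> P Q = ore_mult \<sigma> \<delta> Q P}"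

definition ore_Kpoly_in ::
    "('a::field poly \<Rightarrow> 'a poly) \<Rightarrow> ('a poly \<Rightarrow> 'a poly) \<Rightarrow> 'a poly poly \<Rightarrow> 'a poly poly set" where
  "ore_Kpoly_in \<sigma> \<delta> P =
     {Q. \<exists>(c::nat \<Rightarrow> 'a) N. Q = (\<Sum>i<N. smult [:c i:] (ore_pow \<sigma> \<delta> P i))}"

end

theory Submission
  imports Defs
begin

text \<open>Since deg \<sigma>(y) = s > 1, \<sigma> multiplies y-degrees by s and is injective, so Ore products
  have no cancellation in the top x-degree: deg (F G) = deg F + deg G, with leading coefficient
  f \<sigma>^(deg F)(g). If Q commutes with P, of degrees n and m with leading coefficients p and q,
  this gives p \<sigma>^n(q) = q \<sigma>^m(p), hence \<rho> + deg q s^n = deg q + \<rho> s^m. Because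
  gcd (1 + ... + s^(a-1)) (1 + ... + s^(b-1)) = 1 + ... + s^(gcd a b - 1), an m that is not a
  multiple of the prime n would force 1 + s + ... + s^(n-1) to divide \<rho>. So n divides m, and as
  the solutions q of the leading-coefficient equation form a K-line, Q - c P^(m/n) has smaller
  degree for a suitable c in K; induction on the degree concludes.\<close>

lemma geometric_sum_add:
  "(\<Sum>i<a + b. s ^ i) = (\<Sum>i<a. s ^ i) + s ^ a * (\<Sum>i<b. s ^ i :: 'a :: comm_semiring_1)"
  by (induction b) (simp_all add: algebra_simps power_add)

lemma geometric_sum_mult:
  "(\<Sum>i<a * q. s ^ i) = (\<Sum>i<a. s ^ i) * (\<Sum>j<q. (s ^ a) ^ j :: 'a :: comm_semiring_1)"
proof (induction q)
  case (Suc q)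
  have "(\<Sum>j<Suc q. (s ^ a) ^ j) = 1 + s ^ a * (\<Sum>j<q. (s ^ a) ^ j)"
    by (simp only: sum.lessThan_Suc_shift power_0 power_Suc sum_distrib_left)
  then show ?case
    using Suc by (simp add: geometric_sum_add algebra_simps)
qed simp

lemma gcd_geometric_sum:
  fixes s :: nat
  shows "gcd (\<Sum>i<a. s ^ i) (\<Sum>i<b. s ^ i) = (\<Sum>i<gcd a b. s ^ i)"
proof (induction a b rule: gcd_nat_induct)
  case (step a b)
  define G where "G = (\<Sum>j<a div b. (s ^ b) ^ j)"
  have "(\<Sum>i<a. s ^ i) = (\<Sum>i<a mod b + b * (a div b). s ^ i)"
    by (simp only: mod_mult_div_eq)
  also have "\<dots> = (s ^ (a mod b) * G) * (\<Sum>i<b. s ^ i) + (\<Sum>i<a mod b. s ^ i)"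
    unfolding G_def geometric_sum_add geometric_sum_mult by (simp only: ac_simps)
  finally have "gcd (\<Sum>i<b. s ^ i) (\<Sum>i<a. s ^ i) = gcd (\<Sum>i<b. s ^ i) (\<Sum>i<a mod b. s ^ i)"
    by (simp only: gcd_add_mult)
  with step show ?case
    by (simp only: gcd.commute[of "\<Sum>i<a. s ^ i"] gcd_red_nat[of a b])
qed simp

lemma geometric_sum_dvd_of_power_eq:
  fixes s d r :: nat
  assumes "s \<ge> 2" "coprime n m" and eq: "r + d * s ^ n = d + r * s ^ m"
  shows "(\<Sum>i<n. s ^ i) dvd r"
proof -
  have "int d * (int s ^ n - 1) = int r * (int s ^ m - 1)"
    using arg_cong[OF eq, of int] by (simp add: algebra_simps)
  then have "(int s - 1) * (int d * (\<Sum>i<n. int s ^ i)) = (int s - 1) * (int r * (\<Sum>i<m. int s ^ i))"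
    by (simp only: power_diff_1_eq) (simp add: algebra_simps)
  then have "d * (\<Sum>i<n. s ^ i) = r * (\<Sum>i<m. s ^ i)"
    using assms(1) by (simp flip: of_nat_mult of_nat_sum of_nat_power)
  moreover have "coprime (\<Sum>i<n. s ^ i) (\<Sum>i<m. s ^ i)"
    using gcd_geometric_sum[of s n m] assms(2) by (simp add: coprime_iff_gcd_eq_1)
  ultimately show ?thesis
    by (metis coprime_dvd_mult_left_iff dvd_triv_right)
qed

lemma smult_sum_right: "smult r (sum g A) = (\<Sum>a\<in>A. smult r (g a))"
  using sum_comp_morphism[of "smult r" g A] by (simp add: o_def smult_add_right)

lemma map_poly_add:
  "(\<And>a b. f (a + b) = f a + f b) \<Longrightarrow> f 0 = 0 \<Longrightarrow> map_poly f (p + q) = map_poly f p + map_poly f q"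
  by (intro poly_eqI) (simp add: coeff_map_poly)

locale ore_extension =
  fixes \<sigma> \<delta> :: "'a::field poly \<Rightarrow> 'a poly"
  assumes endo: "ore_endo \<sigma>" and sigma_derivation: "ore_sigma_derivation \<sigma> \<delta>"
begin

abbreviation xmul where "xmul \<equiv> ore_xmul \<sigma> \<delta>"
abbreviation ore_times (infixl "\<star>" 70) where "f \<star> g \<equiv> ore_mult \<sigma> \<delta> f g"

lemma sigma_add: "\<sigma> (a + b) = \<sigma> a + \<sigma> b"
  and sigma_mult: "\<sigma> (a * b) = \<sigma> a * \<sigma> b"
  and sigma_1: "\<sigma> 1 = 1"
  and sigma_const: "\<sigma> [:c:] = [:c:]"
  using endo unfolding ore_endo_def by auto

lemma delta_add: "\<delta> (a + b) = \<delta> a + \<delta> b"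
  and delta_smult: "\<delta> (smult c a) = smult c (\<delta> a)"
  and delta_mult: "\<delta> (a * b) = \<sigma> a * \<delta> b + \<delta> a * b"
  using sigma_derivation unfolding ore_sigma_derivation_def by auto

lemma sigma_0 [simp]: "\<sigma> 0 = 0"
  using sigma_add[of 0 0] by (simp only: add_0_right add_cancel_right_right)

lemma delta_0 [simp]: "\<delta> 0 = 0"
  using delta_add[of 0 0] by (simp only: add_0_right add_cancel_right_right)

lemma delta_1 [simp]: "\<delta> 1 = 0"
  using delta_mult[of 1 1] by (simp only: sigma_1 mult_1_left mult_1_right add_cancel_right_right)

lemma delta_const [simp]: "\<delta> [:c:] = 0"
  by (metis delta_1 delta_smult smult_0_right smult_one)

lemma sigma_smult: "\<sigma> (smult c a) = smult c (\<sigma> a)"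
  using sigma_mult[of "[:c:]" a] by (simp add: sigma_const)

lemma sigma_pow_add: "(\<sigma> ^^ k) (a + b) = (\<sigma> ^^ k) a + (\<sigma> ^^ k) b"
  by (induction k) (auto simp: sigma_add)

lemma sigma_pow_smult: "(\<sigma> ^^ k) (smult c a) = smult c ((\<sigma> ^^ k) a)"
  by (induction k) (auto simp: sigma_smult)

lemma sigma_pow_diff: "(\<sigma> ^^ k) (a - b) = (\<sigma> ^^ k) a - (\<sigma> ^^ k) b"
  using sigma_pow_add[of k "a - b" b] by (simp add: eq_diff_eq)

lemma xmul_add: "xmul (f + g) = xmul f + xmul g"
  unfolding ore_xmul_def by (simp add: map_poly_add sigma_add delta_add)

lemma xmul_0 [simp]: "xmul 0 = 0"
  unfolding ore_xmul_def by simp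

lemma xmul_sum: "xmul (sum g A) = (\<Sum>a\<in>A. xmul (g a))"
  using sum_comp_morphism[of xmul g A, OF xmul_0 xmul_add] by (simp add: o_def)

lemma xmul_pow_add: "(xmul ^^ i) (f + g) = (xmul ^^ i) f + (xmul ^^ i) g"
  by (induction i) (auto simp: xmul_add)

lemma xmul_pow_0 [simp]: "(xmul ^^ i) 0 = 0"
  by (induction i) auto

lemma xmul_smult: "xmul (smult r g) = smult (\<sigma> r) (xmul g) + smult (\<delta> r) g"
  unfolding ore_xmul_def
  by (intro poly_eqI)
    (simp add: coeff_map_poly coeff_pCons sigma_mult delta_mult algebra_simps split: nat.splits)

lemma xmul_pow_smult_const: "(xmul ^^ i) (smult [:c:] g) = smult [:c:] ((xmul ^^ i) g)"
  by (induction i) (auto simp: xmul_smult sigma_const)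

lemma coeff_xmul: "coeff (xmul f) i = (case i of 0 \<Rightarrow> 0 | Suc j \<Rightarrow> \<sigma> (coeff f j)) + \<delta> (coeff f i)"
  unfolding ore_xmul_def by (simp add: coeff_map_poly coeff_pCons split: nat.split)

lemma degree_xmul_le: "degree (xmul f) \<le> Suc (degree f)"
  by (rule degree_le) (simp add: coeff_xmul coeff_eq_0 split: nat.split)

lemma xmul_pow_1: "(xmul ^^ i) 1 = monom 1 i"
proof (induction i)
  case (Suc i)
  have "xmul (monom 1 i) = monom 1 (Suc i)"
    by (intro poly_eqI) (simp add: coeff_xmul coeff_monom sigma_1 split: nat.split)
  then show ?case
    using Suc by simp
qed (simp add: monom_0 one_pCons)

lemma degree_xmul_pow_le: "degree ((xmul ^^ i) f) \<le> degree f + i"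
  by (induction i) (auto intro: order.trans[OF degree_xmul_le])

lemma coeff_xmul_pow_top: "coeff ((xmul ^^ i) f) (degree f + i) = (\<sigma> ^^ i) (lead_coeff f)"
proof (induction i)
  case (Suc i)
  have "coeff ((xmul ^^ i) f) (Suc (degree f + i)) = 0"
    using degree_xmul_pow_le[of i f] by (simp add: coeff_eq_0)
  then show ?case
    using Suc by (simp add: coeff_xmul)
qed simp

lemma ore_mult_eq_sum:
  assumes "degree f \<le> N"
  shows "f \<star> h = (\<Sum>i\<le>N. smult (coeff f i) ((xmul ^^ i) h))"
  unfolding ore_mult_def
  by (rule sum.mono_neutral_left) (use assms in \<open>auto simp: coeff_eq_0\<close>)

lemma ore_mult_0_left [simp]: "0 \<star> h = 0"
  and ore_mult_0_right [simp]: "f \<star> 0 = 0"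
  unfolding ore_mult_def by simp_all

lemma ore_mult_add_left: "(f + g) \<star> h = f \<star> h + g \<star> h"
proof -
  have "degree (f + g) \<le> max (degree f) (degree g)"
    by (simp add: degree_add_le)
  then show ?thesis
    by (simp add: ore_mult_eq_sum[of _ "max (degree f) (degree g)"] smult_add_left sum.distrib)
qed

lemma ore_mult_add_right: "f \<star> (g + h) = f \<star> g + f \<star> h"
  unfolding ore_mult_def by (simp add: xmul_pow_add smult_add_right sum.distrib)

lemma ore_mult_diff_left: "(f - g) \<star> h = f \<star> h - g \<star> h"
  using ore_mult_add_left[of "f - g" g h] by (simp add: eq_diff_eq)

lemma ore_mult_diff_right: "f \<star> (g - h) = f \<star> g - f \<star> h"
  using ore_mult_add_right[of f "g - h" h] by (simp add: eq_diff_eq)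

lemma ore_mult_sum_left: "sum g A \<star> h = (\<Sum>a\<in>A. g a \<star> h)"
  using sum_comp_morphism[of "\<lambda>u. u \<star> h" g A, OF ore_mult_0_left ore_mult_add_left]
  by (simp add: o_def)

lemma ore_mult_sum_right: "f \<star> sum g A = (\<Sum>a\<in>A. f \<star> g a)"
  using sum_comp_morphism[of "(\<star>) f" g A, OF ore_mult_0_right ore_mult_add_right]
  by (simp add: o_def)

lemma ore_mult_smult_left: "smult r f \<star> h = smult r (f \<star> h)"
  using degree_smult_le[of r f]
  by (simp add: ore_mult_eq_sum[of _ "degree f"] smult_sum_right ore_mult_def)

lemma ore_mult_smult_const_right: "f \<star> smult [:c:] h = smult [:c:] (f \<star> h)"
  unfolding ore_mult_def by (simp add: xmul_pow_smult_const smult_sum_right mult.commute)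

lemma ore_mult_1_left: "1 \<star> h = h"
  unfolding ore_mult_def by simp

lemma ore_mult_1_right: "f \<star> 1 = f"
  unfolding ore_mult_def by (simp add: xmul_pow_1 smult_monom poly_as_sum_of_monoms')

lemma ore_mult_xmul_left: "xmul f \<star> h = xmul (f \<star> h)"
proof -
  define D where "D = degree f"
  have "xmul f \<star> h = (\<Sum>i\<le>Suc D. smult (coeff (xmul f) i) ((xmul ^^ i) h))"
    using degree_xmul_le[of f] by (simp add: ore_mult_eq_sum D_def)
  also have "\<dots> = (\<Sum>i\<le>Suc D. smult (case i of 0 \<Rightarrow> 0 | Suc j \<Rightarrow> \<sigma> (coeff f j)) ((xmul ^^ i) h))
      + (\<Sum>i\<le>Suc D. smult (\<delta> (coeff f i)) ((xmul ^^ i) h))"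
    by (simp add: coeff_xmul smult_add_left sum.distrib)
  also have "(\<Sum>i\<le>Suc D. smult (case i of 0 \<Rightarrow> 0 | Suc j \<Rightarrow> \<sigma> (coeff f j)) ((xmul ^^ i) h))
      = (\<Sum>j\<le>D. smult (\<sigma> (coeff f j)) (xmul ((xmul ^^ j) h)))"
    by (subst sum.atMost_Suc_shift) simp
  also have "(\<Sum>i\<le>Suc D. smult (\<delta> (coeff f i)) ((xmul ^^ i) h))
      = (\<Sum>j\<le>D. smult (\<delta> (coeff f j)) ((xmul ^^ j) h))"
    by (simp add: D_def coeff_eq_0)
  also have "(\<Sum>j\<le>D. smult (\<sigma> (coeff f j)) (xmul ((xmul ^^ j) h)))
      + (\<Sum>j\<le>D. smult (\<delta> (coeff f j)) ((xmul ^^ j) h))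
      = (\<Sum>j\<le>D. xmul (smult (coeff f j) ((xmul ^^ j) h)))"
    by (simp add: xmul_smult sum.distrib)
  also have "\<dots> = xmul (f \<star> h)"
    unfolding ore_mult_def D_def by (simp add: xmul_sum)
  finally show ?thesis .
qed

lemma ore_mult_xmul_pow_left: "(xmul ^^ i) f \<star> h = (xmul ^^ i) (f \<star> h)"
  by (induction i) (auto simp: ore_mult_xmul_left)

lemma degree_ore_mult_le: "degree (f \<star> g) \<le> degree f + degree g"
  unfolding ore_mult_def
  by (intro degree_sum_le order.trans[OF degree_smult_le])
    (auto intro: order.trans[OF degree_xmul_pow_le])

lemma coeff_ore_mult_top:
  "coeff (f \<star> g) (degree f + degree g) = lead_coeff f * (\<sigma> ^^ degree f) (lead_coeff g)"
proof -
  define D where "D = degree f"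
  let ?term = "\<lambda>i. coeff (smult (coeff f i) ((xmul ^^ i) g)) (D + degree g)"
  have below_top: "?term i = 0" if "i < D" for i
    using that degree_xmul_pow_le[of i g] by (simp add: coeff_eq_0)
  have "coeff (f \<star> g) (D + degree g) = (\<Sum>i\<le>D. ?term i)"
    unfolding ore_mult_def D_def by (simp only: coeff_sum)
  also have "\<dots> = ?term D"
    using below_top by (subst sum.remove[of _ D]) (auto intro!: sum.neutral simp del: coeff_smult)
  also have "\<dots> = lead_coeff f * (\<sigma> ^^ D) (lead_coeff g)"
    using coeff_xmul_pow_top[of D g] by (simp add: D_def add.commute)
  finally show ?thesis
    unfolding D_def .
qed

lemma ore_mult_assoc: "(f \<star> g) \<star> h = f \<star> (g \<star> h)"
  unfolding ore_mult_def[of \<sigma> \<delta> f g] ore_mult_def[of \<sigma> \<delta> f "g \<star> h"]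
  by (simp add: ore_mult_sum_left ore_mult_smult_left ore_mult_xmul_pow_left)

lemma ore_pow_commute: "P \<star> ore_pow \<sigma> \<delta> P k = ore_pow \<sigma> \<delta> P k \<star> P"
proof (induction k)
  case (Suc k)
  then show ?case
    by (simp add: ore_mult_assoc flip: Suc.IH)
qed (simp add: ore_mult_1_left ore_mult_1_right)

lemma ore_Kpoly_in_subset_centralizer: "ore_Kpoly_in \<sigma> \<delta> P \<subseteq> ore_centralizer \<sigma> \<delta> P"
proof
  fix Q assume "Q \<in> ore_Kpoly_in \<sigma> \<delta> P"
  then obtain c N where Q: "Q = (\<Sum>i<N. smult [:c i:] (ore_pow \<sigma> \<delta> P i))"
    unfolding ore_Kpoly_in_def by blast
  have "P \<star> Q = (\<Sum>i<N. smult [:c i:] (P \<star> ore_pow \<sigma> \<delta> P i))"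
    unfolding Q by (simp add: ore_mult_sum_right ore_mult_smult_const_right)
  also have "\<dots> = Q \<star> P"
    unfolding Q by (simp add: ore_pow_commute ore_mult_sum_left ore_mult_smult_left)
  finally show "Q \<in> ore_centralizer \<sigma> \<delta> P"
    unfolding ore_centralizer_def by simp
qed

lemma ore_centralizer_diff_smult_pow:
  assumes "Q \<in> ore_centralizer \<sigma> \<delta> P"
  shows "Q - smult [:c:] (ore_pow \<sigma> \<delta> P k) \<in> ore_centralizer \<sigma> \<delta> P"
  using assms ore_pow_commute[of P k] unfolding ore_centralizer_def
  by (simp add: ore_mult_diff_left ore_mult_diff_right ore_mult_smult_left ore_mult_smult_const_right)

lemma ore_Kpoly_in_0: "0 \<in> ore_Kpoly_in \<sigma> \<delta> P"
  unfolding ore_Kpoly_in_def by (auto intro!: exI[of _ 0])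

lemma ore_Kpoly_in_add_smult_pow:
  assumes "Q \<in> ore_Kpoly_in \<sigma> \<delta> P"
  shows "Q + smult [:a:] (ore_pow \<sigma> \<delta> P k) \<in> ore_Kpoly_in \<sigma> \<delta> P"
proof -
  obtain c N where Q: "Q = (\<Sum>i<N. smult [:c i:] (ore_pow \<sigma> \<delta> P i))"
    using assms unfolding ore_Kpoly_in_def by blast
  define N' where "N' = max N (Suc k)"
  define c' where "c' i = (if i < N then c i else 0) + (if i = k then a else 0)" for i
  have "(\<Sum>i<N'. smult [:c' i:] (ore_pow \<sigma> \<delta> P i))
     = (\<Sum>i<N'. smult [:if i < N then c i else 0:] (ore_pow \<sigma> \<delta> P i))
     + (\<Sum>i<N'. smult [:if i = k then a else 0:] (ore_pow \<sigma> \<delta> P i))"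
  proof -
    have "smult [:x + y:] R = smult [:x:] R + smult [:y:] R" for x y and R :: "'a poly poly"
      by (metis add_pCons add_0 smult_add_left)
    then show ?thesis
      unfolding c'_def by (simp add: sum.distrib)
  qed
  also have "(\<Sum>i<N'. smult [:if i < N then c i else 0:] (ore_pow \<sigma> \<delta> P i)) = Q"
    unfolding Q N'_def by (rule sum.mono_neutral_cong_right) auto
  also have "(\<Sum>i<N'. smult [:if i = k then a else 0:] (ore_pow \<sigma> \<delta> P i)) = smult [:a:] (ore_pow \<sigma> \<delta> P k)"
    by (subst sum.remove[of _ k]) (auto simp: N'_def intro!: sum.neutral)
  finally show ?thesis
    unfolding ore_Kpoly_in_def by (auto intro!: exI[of _ c'] exI[of _ N'])
qed

end

locale ore_extension_expanding = ore_extension +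
  assumes degree_sigma_y: "degree (\<sigma> [:0, 1:]) > 1"
begin

abbreviation s where "s \<equiv> degree (\<sigma> [:0, 1:])"

lemma sigma_eq_pcompose: "\<sigma> q = pcompose q (\<sigma> [:0, 1:])"
proof (induction q)
  case (pCons a q)
  have "pCons a q = [:a:] + [:0, 1:] * q"
    by simp
  then have "\<sigma> (pCons a q) = [:a:] + \<sigma> [:0, 1:] * \<sigma> q"
    by (metis sigma_add sigma_mult sigma_const)
  then show ?case
    using pCons by (simp add: pcompose_pCons)
qed simp

lemma degree_sigma: "degree (\<sigma> q) = degree q * s"
  by (subst sigma_eq_pcompose) (rule degree_pcompose)

lemma sigma_eq_0_iff [simp]: "\<sigma> q = 0 \<longleftrightarrow> q = 0"
proof
  assume "\<sigma> q = 0"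
  then have "degree q = 0"
    using degree_sigma[of q] degree_sigma_y by simp
  then obtain c where "q = [:c:]"
    by (metis degree_eq_zeroE)
  then show "q = 0"
    using \<open>\<sigma> q = 0\<close> by (simp add: sigma_const)
qed simp

lemma degree_sigma_pow: "degree ((\<sigma> ^^ k) q) = degree q * s ^ k"
proof (induction k)
  case (Suc k)
  then show ?case
    using degree_sigma[of "(\<sigma> ^^ k) q"] by simp
qed simp

lemma sigma_pow_eq_0_iff [simp]: "(\<sigma> ^^ k) q = 0 \<longleftrightarrow> q = 0"
  by (induction k) simp_all

lemma degree_ore_mult:
  assumes "f \<noteq> 0" "g \<noteq> 0"
  shows "degree (f \<star> g) = degree f + degree g"
  using assms coeff_ore_mult_top[of f g] degree_ore_mult_le[of f g]
  by (intro antisym le_degree) auto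

lemma lead_coeff_ore_mult:
  assumes "f \<noteq> 0" "g \<noteq> 0"
  shows "lead_coeff (f \<star> g) = lead_coeff f * (\<sigma> ^^ degree f) (lead_coeff g)"
  using assms by (simp add: degree_ore_mult coeff_ore_mult_top)

lemma ore_mult_eq_0_iff: "f \<star> g = 0 \<longleftrightarrow> f = 0 \<or> g = 0"
proof (cases "f = 0 \<or> g = 0")
  case False
  then have "lead_coeff (f \<star> g) \<noteq> 0"
    by (simp add: lead_coeff_ore_mult)
  with False show ?thesis
    by auto
qed auto

lemma ore_pow_eq_0_iff: "ore_pow \<sigma> \<delta> P k = 0 \<longleftrightarrow> P = 0 \<and> k > 0"
  by (induction k) (auto simp: ore_mult_eq_0_iff)

lemma degree_ore_pow:
  assumes "P \<noteq> 0"
  shows "degree (ore_pow \<sigma> \<delta> P k) = k * degree P"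
proof (induction k)
  case (Suc k)
  then show ?case
    using assms by (simp add: degree_ore_mult ore_pow_eq_0_iff)
qed simp

lemma lead_coeff_twisted_commute:
  assumes "P \<noteq> 0" "Q \<noteq> 0" "P \<star> Q = Q \<star> P"
  shows "lead_coeff P * (\<sigma> ^^ degree P) (lead_coeff Q) = lead_coeff Q * (\<sigma> ^^ degree Q) (lead_coeff P)"
  using lead_coeff_ore_mult[OF assms(1,2)] lead_coeff_ore_mult[OF assms(2,1)] assms(3) by simp

lemma degree_twisted_commute:
  assumes "p \<noteq> 0" "q \<noteq> 0" "p * (\<sigma> ^^ n) q = q * (\<sigma> ^^ m) p"
  shows "degree p + degree q * s ^ n = degree q + degree p * s ^ m"
proof -
  have "degree p + degree q * s ^ n = degree (p * (\<sigma> ^^ n) q)"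
    using assms(1,2) by (simp add: degree_mult_eq degree_sigma_pow)
  also have "\<dots> = degree q + degree p * s ^ m"
    using assms by (simp add: degree_mult_eq degree_sigma_pow)
  finally show ?thesis .
qed

lemma degree_eq_of_twisted_commute:
  assumes "p \<noteq> 0" "q \<noteq> 0" "n > 0" "p * (\<sigma> ^^ n) q = q * (\<sigma> ^^ n) p"
  shows "degree p = degree q"
proof -
  have "int (degree p) * (int s ^ n - 1) = int (degree q) * (int s ^ n - 1)"
    using arg_cong[OF degree_twisted_commute[OF assms(2,1) assms(4)[symmetric]], of int]
    by (simp add: algebra_simps)
  moreover have "int s ^ n > 1"
    using degree_sigma_y assms(3) by (simp add: one_less_power)
  ultimately show ?thesis
    by simp
qed

text \<open>For fixed nonzero p the solutions q of p \<sigma>^n(q) = q \<sigma>^m(p) form a line: two of them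
  satisfy \<sigma>^n(q1) q2 = q1 \<sigma>^n(q2), an equation that forces equal degrees and
  is inherited by q1 - c q2, whose degree is smaller for the right c.\<close>

lemma twisted_commute_unique:
  assumes "p \<noteq> 0" "q1 \<noteq> 0" "q2 \<noteq> 0" "n > 0"
    and eq1: "p * (\<sigma> ^^ n) q1 = q1 * (\<sigma> ^^ m) p"
    and eq2: "p * (\<sigma> ^^ n) q2 = q2 * (\<sigma> ^^ m) p"
  shows "\<exists>c. q1 = smult c q2"
proof -
  have "p * ((\<sigma> ^^ n) q1 * q2) = q1 * (\<sigma> ^^ m) p * q2"
    by (simp add: eq1 flip: mult.assoc)
  also have "\<dots> = q1 * (q2 * (\<sigma> ^^ m) p)"
    by (simp add: ac_simps)
  also have "\<dots> = p * (q1 * (\<sigma> ^^ n) q2)"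
    by (simp add: ac_simps flip: eq2)
  finally have swap: "q2 * (\<sigma> ^^ n) q1 = q1 * (\<sigma> ^^ n) q2"
    using assms(1) by (simp add: mult.commute)
  have deg: "degree q2 = degree q1"
    by (rule degree_eq_of_twisted_commute[OF assms(3,2,4) swap])
  define c where "c = lead_coeff q1 / lead_coeff q2"
  define r where "r = q1 - smult c q2"
  have "r = 0"
  proof (rule ccontr)
    assume "r \<noteq> 0"
    have "q2 * (\<sigma> ^^ n) r = r * (\<sigma> ^^ n) q2"
      unfolding r_def using swap by (simp add: sigma_pow_diff sigma_pow_smult algebra_simps)
    then have "degree r = degree q1"
      using degree_eq_of_twisted_commute[OF assms(3) \<open>r \<noteq> 0\<close> assms(4)] deg by simp
    moreover have "coeff r (degree q1) = 0"
      unfolding r_def c_def using deg[symmetric] assms(3) by simp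
    ultimately show False
      using \<open>r \<noteq> 0\<close> by (metis leading_coeff_0_iff)
  qed
  then show ?thesis
    unfolding r_def by auto
qed

lemma lead_coeff_centralizer_multiple:
  assumes "degree P > 0" "Q \<in> ore_centralizer \<sigma> \<delta> P" "Q \<noteq> 0" "degree Q = k * degree P"
  shows "\<exists>c. lead_coeff Q = smult c (lead_coeff (ore_pow \<sigma> \<delta> P k))"
proof -
  define Pk where "Pk = ore_pow \<sigma> \<delta> P k"
  have "P \<noteq> 0"
    using assms(1) by auto
  then have "Pk \<noteq> 0" "degree Pk = degree Q"
    using assms(4) by (simp_all add: Pk_def ore_pow_eq_0_iff degree_ore_pow)
  have "lead_coeff P * (\<sigma> ^^ degree P) (lead_coeff Pk) = lead_coeff Pk * (\<sigma> ^^ degree Q) (lead_coeff P)"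
    using lead_coeff_twisted_commute[OF \<open>P \<noteq> 0\<close> \<open>Pk \<noteq> 0\<close>] \<open>degree Pk = degree Q\<close>
    by (simp add: Pk_def ore_pow_commute)
  moreover have "lead_coeff P * (\<sigma> ^^ degree P) (lead_coeff Q) = lead_coeff Q * (\<sigma> ^^ degree Q) (lead_coeff P)"
    using lead_coeff_twisted_commute[OF \<open>P \<noteq> 0\<close> assms(3)] assms(2)
    unfolding ore_centralizer_def by simp
  ultimately show ?thesis
    using twisted_commute_unique[of "lead_coeff P" "lead_coeff Q" "lead_coeff Pk" "degree P"]
      \<open>P \<noteq> 0\<close> assms(1,3) \<open>Pk \<noteq> 0\<close> by (auto simp: Pk_def)
qed

lemma ore_centralizer_subset_Kpoly_in:
  assumes "degree P > 0"
    and degree_dvd: "\<And>Q. Q \<in> ore_centralizer \<sigma> \<delta> P \<Longrightarrow> Q \<noteq> 0 \<Longrightarrow> degree P dvd degree Q"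
  shows "ore_centralizer \<sigma> \<delta> P \<subseteq> ore_Kpoly_in \<sigma> \<delta> P"
proof
  fix Q assume "Q \<in> ore_centralizer \<sigma> \<delta> P"
  then show "Q \<in> ore_Kpoly_in \<sigma> \<delta> P"
  proof (induction "degree Q" arbitrary: Q rule: less_induct)
    case less
    show ?case
    proof (cases "Q = 0")
      case True
      then show ?thesis
        by (simp add: ore_Kpoly_in_0)
    next
      case False
      obtain k where k: "degree Q = k * degree P"
        using degree_dvd[OF less.prems False] by (metis dvdE mult.commute)
      define Pk where "Pk = ore_pow \<sigma> \<delta> P k"
      obtain c where c: "lead_coeff Q = smult c (lead_coeff Pk)"
        using lead_coeff_centralizer_multiple[OF assms(1) less.prems False k] by (auto simp: Pk_def)
      have "degree Pk = degree Q"
        using assms(1) k degree_ore_pow[of P k] by (metis Pk_def degree_0 less_irrefl)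
      define Q' where "Q' = Q - smult [:c:] Pk"
      have "Q' \<in> ore_centralizer \<sigma> \<delta> P"
        unfolding Q'_def Pk_def by (rule ore_centralizer_diff_smult_pow[OF less.prems])
      moreover have "Q' = 0 \<or> degree Q' < degree Q"
      proof -
        have "degree Q' \<le> degree Q" "coeff Q' (degree Q) = 0"
          unfolding Q'_def using \<open>degree Pk = degree Q\<close> c by (auto intro: degree_diff_le)
        then show ?thesis
          by (metis le_neq_implies_less leading_coeff_0_iff)
      qed
      ultimately have "Q' \<in> ore_Kpoly_in \<sigma> \<delta> P"
        using less.hyps ore_Kpoly_in_0 by blast
      then show ?thesis
        using ore_Kpoly_in_add_smult_pow[of Q' P c k] by (simp add: Q'_def Pk_def)
    qed
  qed
qed

lemma degree_dvd_of_commute: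
  assumes "prime n" "degree P = n" "\<not> (\<Sum>i<n. s ^ i) dvd degree (lead_coeff P)"
    and "Q \<in> ore_centralizer \<sigma> \<delta> P" "Q \<noteq> 0"
  shows "n dvd degree Q"
proof (rule ccontr)
  assume "\<not> n dvd degree Q"
  with assms(1) have "coprime n (degree Q)"
    by (simp add: prime_imp_coprime)
  have "P \<noteq> 0"
    using assms(1,2) prime_gt_0_nat by auto
  then have "lead_coeff P * (\<sigma> ^^ n) (lead_coeff Q) = lead_coeff Q * (\<sigma> ^^ degree Q) (lead_coeff P)"
    using lead_coeff_twisted_commute[OF _ assms(5)] assms(2,4) unfolding ore_centralizer_def by blast
  then have "degree (lead_coeff P) + degree (lead_coeff Q) * s ^ n
      = degree (lead_coeff Q) + degree (lead_coeff P) * s ^ degree Q"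
    using \<open>P \<noteq> 0\<close> assms(5) by (intro degree_twisted_commute) simp_all
  then have "(\<Sum>i<n. s ^ i) dvd degree (lead_coeff P)"
    using degree_sigma_y \<open>coprime n (degree Q)\<close>
    by (intro geometric_sum_dvd_of_power_eq[where m = "degree Q" and d = "degree (lead_coeff Q)"]) simp_all
  with assms(3) show False ..
qed

end

theorem proposition5p3:
  fixes \<sigma> \<delta> :: "'a::field poly \<Rightarrow> 'a poly"
    and P :: "'a poly poly"
    and n :: nat
  assumes "ore_endo \<sigma>"
    and "degree (\<sigma> [:0, 1:]) > 1"
    and "ore_sigma_derivation \<sigma> \<delta>"
    and "degree P = n"
    and "prime n"
    and "\<not> ((\<Sum>i<n. degree (\<sigma> [:0, 1:]) ^ i) dvd degree (lead_coeff P))"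
  shows "ore_centralizer \<sigma> \<delta> P = ore_Kpoly_in \<sigma> \<delta> P"
proof -
  interpret ore_extension_expanding \<sigma> \<delta>
    using assms(1-3) by unfold_locales
  have "ore_centralizer \<sigma> \<delta> P \<subseteq> ore_Kpoly_in \<sigma> \<delta> P"
  proof (rule ore_centralizer_subset_Kpoly_in)
    show "degree P > 0"
      using assms(4,5) prime_gt_0_nat by simp
    show "degree P dvd degree Q" if "Q \<in> ore_centralizer \<sigma> \<delta> P" "Q \<noteq> 0" for Q
      using degree_dvd_of_commute[OF assms(5,4,6) that] assms(4) by simp
  qed
  with ore_Kpoly_in_subset_centralizer show ?thesis
    by blast
qed

end
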